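(* Let $n\ge 0$ and $i,j\ge -1$ be integers with $i+j=n-1$. Let $p\in\Gamma_n$ with an occurrence $p=bqa$ where $q\in\Gamma_i$. Then: 1. if $i$ is odd, then $a$ is trivial if and only if $\sigma_j(p)\le b$ (i.e. $\sigma_j(p)$, as a suffix of $p$, lies inside $b$); 2. if $i$ is even, then $a$ is a proper prefix of $\mathrm{pre}_p(\sigma_{n-1}(p))$ if and only if $\sigma_j(p)\le b$. Similarly: 1'. if $i$ is odd, then $b$ is trivial if and only if $\pi_j(p)\le a$; 2'. if $i$ is even, then $b$ is a proper suffix of $\mathrm{suf}_p(\pi_{n-1}(p))$ if and only if $\pi_j(p)\le a$.
   Context: Let $\Bbbk$ be a field, $Q=(Q_0,Q_1,s,t)$ a finite quiver, and $A=\Bbbk Q/I$ a finite-dimensional monomial algebra, i.e. $I$ is an ideal generated by paths of length at least $2$. Paths are written from right to left: a path is $p=\alpha_n\cdots\alpha_1$ with arrows $\alpha_i$ and $t(\alpha_i)=s(\alpha_{i+1})$; vertices are the paths of length $0$ (trivial paths, also denoted $1$); $qp$ denotes concatenation when $t(p)=s(q)$. Let $\mathcal B$ be the set of paths not lying in $I$. If $p=bqa$ for paths $a,b,q$, then $q$ is a divisor of $p$; we write $q\le p$ to mean that $q$ is a divisor of $p$ at a fixed position (an occurrence), and then $\mathrm{pre}_p(q):=a$, $\mathrm{suf}_p(q):=b$. If $b$ is trivial, $q$ is a suffix; if $a$ is trivial, $q$ is a prefix; proper means $q\neq p$. Inclusions $\le$ between subpaths of a fixed path refer to their positions in that path. For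 $n\ge -1$, a left $n$-ambiguity is a path $p$ with a decomposition $p=u_{-1}u_0u_1\cdots u_n$ such that $u_{-1}\in Q_0$, $u_0\in Q_1$, $u_i\in\mathcal B$ for all $i$, and for every $0\le i\le n-1$, $u_iu_{i+1}\in I$ while no proper suffix of $u_iu_{i+1}$ lies in $I$ (one writes $p=u_0\cdots u_n$). A right $n$-ambiguity is a path with a decomposition $p=v_n\cdots v_0v_{-1}$ with $v_{-1}\in Q_0$, $v_0\in Q_1$, $v_i\in\mathcal B$, and for $0\le i\le n-1$, $v_{i+1}v_i\in I$ while no proper prefix of $v_{i+1}v_i$ lies in $I$. A path is a left $n$-ambiguity iff it is a right $n$-ambiguity; such paths are called $n$-ambiguities, and $\Gamma_n$ denotes their set. Both decompositions of an $n$-ambiguity are unique. For $p\in\Gamma_n$ with left decomposition $u_0\cdots u_n$ and right decomposition $v_n\cdots v_0$, and $-1\le m\le n$, set $\sigma_m(p):=u_0\cdots u_m$ (a suffix of $p$ which is an $m$-ambiguity) and $\pi_m(p):=v_m\cdots v_0$ (a prefix of $p$ which is an $m$-ambiguity). *)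

theory Defs
  imports Main
begin

record ('v, 'a) quiver =
  verts :: "'v set"
  arrs  :: "'a set"
  src   :: "'a \<Rightarrow> 'v"
  tgt   :: "'a \<Rightarrow> 'v"

(* A path is represented as (start vertex, list of arrows in order of traversal).
   The path alpha_n ... alpha_1 (written right to left) is (s alpha_1, [alpha_1, ..., alpha_n]);
   the trivial path at vertex v is (v, []). *)
type_synonym ('v, 'a) path = "'v \<times> 'a list"

definition is_path :: "('v, 'a) quiver \<Rightarrow> ('v, 'a) path \<Rightarrow> bool" where
  "is_path Q p \<longleftrightarrow> fst p \<in> verts Q \<and> set (snd p) \<subseteq> arrs Q
     \<and> (snd p \<noteq> [] \<longrightarrow> src Q (hd (snd p)) = fst p)
     \<and> (\<forall>k. Suc k < length (snd p) \<longrightarrow> tgt Q (snd p ! k) = src Q (snd p ! Suc k))"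

definition plen :: "('v, 'a) path \<Rightarrow> nat" where
  "plen p = length (snd p)"

(* vertex of p at position k (k = number of arrows traversed before it) *)
definition vertex_at :: "('v, 'a) quiver \<Rightarrow> ('v, 'a) path \<Rightarrow> nat \<Rightarrow> 'v" where
  "vertex_at Q p k = (if k = 0 then fst p else tgt Q (snd p ! (k - 1)))"

definition is_quiver :: "('v, 'a) quiver \<Rightarrow> bool" where
  "is_quiver Q \<longleftrightarrow> finite (verts Q) \<and> finite (arrs Q)
     \<and> (\<forall>\<alpha>\<in>arrs Q. src Q \<alpha> \<in> verts Q \<and> tgt Q \<alpha> \<in> verts Q)"

(* The monomial ideal I generated by a set R of paths (arrow lists) of length >= 2:
   a path lies in I iff it has a divisor (contiguous subpath) belonging to R. *)
definition in_I :: "'a list set \<Rightarrow> 'a list \<Rightarrow> bool" where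
  "in_I R xs \<longleftrightarrow> (\<exists>r\<in>R. \<exists>u w. xs = u @ r @ w)"

definition basis_paths :: "('v, 'a) quiver \<Rightarrow> 'a list set \<Rightarrow> ('v, 'a) path set" where
  "basis_paths Q R = {p. is_path Q p \<and> \<not> in_I R (snd p)}"

definition fd_monomial :: "('v, 'a) quiver \<Rightarrow> 'a list set \<Rightarrow> bool" where
  "fd_monomial Q R \<longleftrightarrow> is_quiver Q
     \<and> (\<forall>r\<in>R. 2 \<le> length r \<and> r \<noteq> [] \<and> is_path Q (src Q (hd r), r))
     \<and> finite (basis_paths Q R)"

(* Left decomposition p = u_{-1} u_0 u_1 ... u_n; us = [u_0, ..., u_n] (arrow lists),
   u_{-1} is the vertex t(p). Traversal order: u_n first, u_0 last. *)
definition left_dec :: "('v, 'a) quiver \<Rightarrow> 'a list set \<Rightarrow> ('v, 'a) path \<Rightarrow> 'a list list \<Rightarrow> bool" where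
  "left_dec Q R p us \<longleftrightarrow> is_path Q p \<and> snd p = concat (rev us)
     \<and> (us \<noteq> [] \<longrightarrow> length (us ! 0) = 1)
     \<and> (\<forall>i<length us. \<not> in_I R (us ! i))
     \<and> (\<forall>i. Suc i < length us \<longrightarrow>
           in_I R (us ! Suc i @ us ! i)
         \<and> (\<forall>k. 0 < k \<and> k \<le> length (us ! Suc i @ us ! i) \<longrightarrow>
                 \<not> in_I R (drop k (us ! Suc i @ us ! i))))"

(* Right decomposition p = v_n ... v_0 v_{-1}; vs = [v_0, ..., v_n] (arrow lists),
   v_{-1} is the vertex s(p). Traversal order: v_0 first, v_n last. *)
definition right_dec :: "('v, 'a) quiver \<Rightarrow> 'a list set \<Rightarrow> ('v, 'a) path \<Rightarrow> 'a list list \<Rightarrow> bool" where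
  "right_dec Q R p vs \<longleftrightarrow> is_path Q p \<and> snd p = concat vs
     \<and> (vs \<noteq> [] \<longrightarrow> length (vs ! 0) = 1)
     \<and> (\<forall>i<length vs. \<not> in_I R (vs ! i))
     \<and> (\<forall>i. Suc i < length vs \<longrightarrow>
           in_I R (vs ! i @ vs ! Suc i)
         \<and> (\<forall>k. k < length (vs ! i @ vs ! Suc i) \<longrightarrow>
                 \<not> in_I R (take k (vs ! i @ vs ! Suc i))))"

definition Gamma :: "('v, 'a) quiver \<Rightarrow> 'a list set \<Rightarrow> int \<Rightarrow> ('v, 'a) path set" where
  "Gamma Q R n = {p. n \<ge> -1 \<and> (\<exists>us. length us = nat (n + 1) \<and> left_dec Q R p us)}"

(* sigma_m(p) = u_0 ... u_m, for p in Gamma_n *)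
definition sigma :: "('v, 'a) quiver \<Rightarrow> 'a list set \<Rightarrow> int \<Rightarrow> int \<Rightarrow> ('v, 'a) path \<Rightarrow> ('v, 'a) path" where
  "sigma Q R n m p =
     (let us = (THE us. length us = nat (n + 1) \<and> left_dec Q R p us);
          xs = concat (rev (take (nat (m + 1)) us))
      in (vertex_at Q p (plen p - length xs), xs))"

(* pi_m(p) = v_m ... v_0, for p in Gamma_n *)
definition pi :: "('v, 'a) quiver \<Rightarrow> 'a list set \<Rightarrow> int \<Rightarrow> int \<Rightarrow> ('v, 'a) path \<Rightarrow> ('v, 'a) path" where
  "pi Q R n m p =
     (let vs = (THE vs. length vs = nat (n + 1) \<and> right_dec Q R p vs)
      in (fst p, concat (take (nat (m + 1)) vs)))"

(* q occurs in p at position k, i.e. p = b q a with a = first k arrows of p *)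
definition occurs_at :: "('v, 'a) quiver \<Rightarrow> ('v, 'a) path \<Rightarrow> ('v, 'a) path \<Rightarrow> nat \<Rightarrow> bool" where
  "occurs_at Q p q k \<longleftrightarrow> k + plen q \<le> plen p
     \<and> take (plen q) (drop k (snd p)) = snd q \<and> vertex_at Q p k = fst q"

definition pre_at :: "('v, 'a) path \<Rightarrow> nat \<Rightarrow> ('v, 'a) path" where
  "pre_at p k = (fst p, take k (snd p))"

definition suf_at :: "('v, 'a) quiver \<Rightarrow> ('v, 'a) path \<Rightarrow> ('v, 'a) path \<Rightarrow> nat \<Rightarrow> ('v, 'a) path" where
  "suf_at Q p q k = (vertex_at Q p (k + plen q), drop (k + plen q) (snd p))"

(* inclusion of subpaths of a fixed path by position: the occurrence of x at position k1
   lies inside the occurrence of y at position k2 *)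
definition occ_le :: "('v, 'a) path \<Rightarrow> nat \<Rightarrow> ('v, 'a) path \<Rightarrow> nat \<Rightarrow> bool" where
  "occ_le x k1 y k2 \<longleftrightarrow> k2 \<le> k1 \<and> k1 + plen x \<le> k2 + plen y"

definition proper_prefix :: "('v, 'a) path \<Rightarrow> ('v, 'a) path \<Rightarrow> bool" where
  "proper_prefix x y \<longleftrightarrow> fst x = fst y \<and> (\<exists>w. w \<noteq> [] \<and> snd y = snd x @ w)"

definition proper_suffix :: "('v, 'a) quiver \<Rightarrow> ('v, 'a) path \<Rightarrow> ('v, 'a) path \<Rightarrow> bool" where
  "proper_suffix Q x y \<longleftrightarrow> vertex_at Q x (plen x) = vertex_at Q y (plen y)
     \<and> (\<exists>w. w \<noteq> [] \<and> snd y = w @ snd x)"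

end

theory Submission
  imports Defs
begin

text \<open>Let \<open>w\<close> be the arrow word of \<open>p\<close>. The predicate ``the segment of \<open>w\<close> between positions
  \<open>s\<close> and \<open>e\<close> lies in \<open>I\<close>'' is preserved by enlarging the segment, and a left decomposition
  \<open>u\<^sub>0 \<dots> u\<^sub>m\<close> of a segment amounts to a decreasing chain of cut positions \<open>c\<^sub>0 > c\<^sub>1 > \<dots>\<close>
  in which each piece avoids \<open>I\<close>, while two consecutive pieces lie in \<open>I\<close> and no longer do
  once their first letter is dropped. Such chains obey a comparison principle: if
  \<open>x\<^sub>m \<le> c\<^sub>t\<close> then \<open>x\<^sub>m\<^sub>+\<^sub>2 \<le> c\<^sub>t\<^sub>+\<^sub>2\<close>, since otherwise two pieces of \<open>x\<close> would show that
  \<open>c\<^sub>t\<^sub>+\<^sub>2\<close> is not minimal.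

  The occurrence \<open>p = b q a\<close> places the chain of \<open>q\<close>, running from the end of \<open>q\<close> down to its
  start, against the chain of \<open>p\<close>, and \<open>\<sigma>\<^sub>j(p)\<close> lies in \<open>b\<close> exactly when \<open>q\<close> ends at or before the
  cut \<open>c\<^sub>j\<^sub>+\<^sub>1\<close>. Comparing two steps at a time, the \<open>i + 1\<close> steps of \<open>q\<close> bring its end to its
  start and the cut \<open>c\<^sub>j\<^sub>+\<^sub>1\<close> either to the start of \<open>p\<close> or, one step short, to the start of
  \<open>\<sigma>\<^sub>n\<^sub>-\<^sub>1(p)\<close>, according to the parity of \<open>i\<close>; comparing in the other direction, from the
  cut one letter before the end of \<open>q\<close>, gives the converse. The statements about \<open>\<pi>\<close> are the
  mirror image for right decompositions, whose existence and uniqueness (needed for \<open>\<pi>\<close> to be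
  well defined) follow from the same comparison principle and a greedy construction.\<close>

section \<open>Chains of cut positions\<close>

locale interval_ideal =
  fixes I :: "nat \<Rightarrow> nat \<Rightarrow> bool"
  assumes enlarge: "a \<le> s \<Longrightarrow> e \<le> b \<Longrightarrow> I s e \<Longrightarrow> I a b"
begin

text \<open>Piece \<open>m\<close> of a left chain is the segment from \<open>c (Suc m)\<close> to \<open>c m\<close>. By monotonicity of
  \<open>I\<close>, dropping a single letter expresses that no proper suffix of two consecutive pieces lies
  in \<open>I\<close>; right chains are the mirror image.\<close>

definition left_chain :: "nat \<Rightarrow> (nat \<Rightarrow> nat) \<Rightarrow> bool" where
  "left_chain P c \<longleftrightarrow>
     (\<forall>m<P. c (Suc m) < c m \<and> \<not> I (c (Suc m)) (c m))
   \<and> (\<forall>m. Suc (Suc m) \<le> P \<longrightarrow> I (c (Suc (Suc m))) (c m) \<and> \<not> I (Suc (c (Suc (Suc m)))) (c m))"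

definition right_chain :: "nat \<Rightarrow> (nat \<Rightarrow> nat) \<Rightarrow> bool" where
  "right_chain P d \<longleftrightarrow>
     (\<forall>m<P. d m < d (Suc m) \<and> \<not> I (d m) (d (Suc m)))
   \<and> (\<forall>m. Suc (Suc m) \<le> P \<longrightarrow> I (d m) (d (Suc (Suc m))) \<and> \<not> I (d m) (d (Suc (Suc m)) - 1))"

lemma left_chainD:
  assumes "left_chain P c"
  shows "m < P \<Longrightarrow> c (Suc m) < c m"
    and "m < P \<Longrightarrow> \<not> I (c (Suc m)) (c m)"
    and "Suc (Suc m) \<le> P \<Longrightarrow> I (c (Suc (Suc m))) (c m)"
    and "Suc (Suc m) \<le> P \<Longrightarrow> \<not> I (Suc (c (Suc (Suc m)))) (c m)"
  using assms unfolding left_chain_def by blast+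

lemma right_chainD:
  assumes "right_chain P d"
  shows "m < P \<Longrightarrow> d m < d (Suc m)"
    and "m < P \<Longrightarrow> \<not> I (d m) (d (Suc m))"
    and "Suc (Suc m) \<le> P \<Longrightarrow> I (d m) (d (Suc (Suc m)))"
    and "Suc (Suc m) \<le> P \<Longrightarrow> \<not> I (d m) (d (Suc (Suc m)) - 1)"
  using assms unfolding right_chain_def by blast+

lemma left_chain_step_le:
  assumes c: "left_chain P c" and x: "left_chain Q x"
    and le: "x m \<le> c t" and m: "Suc (Suc m) \<le> Q" and t: "Suc (Suc t) \<le> P"
  shows "x (Suc (Suc m)) \<le> c (Suc (Suc t))"
proof (rule ccontr)
  assume "\<not> ?thesis"
  with le have "I (Suc (c (Suc (Suc t)))) (c t)"
    by (intro enlarge[OF _ _ left_chainD(3)[OF x m]]) auto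
  with left_chainD(4)[OF c t] show False by contradiction
qed

lemma left_chain_shift_le:
  assumes c: "left_chain P c" and x: "left_chain Q x" and le: "x m \<le> c t"
  shows "m + 2 * s \<le> Q \<Longrightarrow> t + 2 * s \<le> P \<Longrightarrow> x (m + 2 * s) \<le> c (t + 2 * s)"
proof (induction s)
  case 0
  show ?case using le by simp
next
  case (Suc s)
  then have "x (m + 2 * s) \<le> c (t + 2 * s)" by simp
  from left_chain_step_le[OF c x this] Suc.prems show ?case by simp
qed

lemma left_chain_unique:
  assumes c: "left_chain P c" and c': "left_chain P c'"
    and start: "c 0 = c' 0" "1 \<le> P \<Longrightarrow> c 1 = c' 1" and "m \<le> P"
  shows "c m = c' m"
proof -
  obtain r s where m: "m = r + 2 * s" and "r = 0 \<or> r = 1"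
    by (metis mod_mult_div_eq add.commute mod2_eq_if)
  then have "c r = c' r" using start \<open>m \<le> P\<close> by auto
  then show ?thesis
    using left_chain_shift_le[OF c c', of r r s] left_chain_shift_le[OF c' c, of r r s]
      \<open>m \<le> P\<close> m by simp
qed

lemma left_chain_piece_beyond:
  assumes c: "left_chain P c" and x: "left_chain Q x"
    and le: "c t \<le> x m" and m: "m < Q" and t: "Suc (Suc t) \<le> P"
  shows "c (Suc (Suc t)) < x (Suc m)"
proof (rule ccontr)
  assume "\<not> ?thesis"
  with le have "I (x (Suc m)) (x m)"
    by (intro enlarge[OF _ _ left_chainD(3)[OF c t]]) auto
  with left_chainD(2)[OF x m] show False by contradiction
qed

lemma right_chain_step_le:
  assumes d: "right_chain P d" and y: "right_chain Q y"
    and le: "d t \<le> y m" and m: "Suc (Suc m) \<le> Q" and t: "Suc (Suc t) \<le> P"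
  shows "d (Suc (Suc t)) \<le> y (Suc (Suc m))"
proof (rule ccontr)
  assume "\<not> ?thesis"
  with le have "I (d t) (d (Suc (Suc t)) - 1)"
    by (intro enlarge[OF _ _ right_chainD(3)[OF y m]]) auto
  with right_chainD(4)[OF d t] show False by contradiction
qed

lemma right_chain_shift_le:
  assumes d: "right_chain P d" and y: "right_chain Q y" and le: "d t \<le> y m"
  shows "m + 2 * s \<le> Q \<Longrightarrow> t + 2 * s \<le> P \<Longrightarrow> d (t + 2 * s) \<le> y (m + 2 * s)"
proof (induction s)
  case 0
  show ?case using le by simp
next
  case (Suc s)
  then have "d (t + 2 * s) \<le> y (m + 2 * s)" by simp
  from right_chain_step_le[OF d y this] Suc.prems show ?case by simp
qed

lemma right_chain_unique:
  assumes d: "right_chain P d" and d': "right_chain P d'"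
    and start: "d 0 = d' 0" "1 \<le> P \<Longrightarrow> d 1 = d' 1" and "m \<le> P"
  shows "d m = d' m"
proof -
  obtain r s where m: "m = r + 2 * s" and "r = 0 \<or> r = 1"
    by (metis mod_mult_div_eq add.commute mod2_eq_if)
  then have "d r = d' r" using start \<open>m \<le> P\<close> by auto
  then show ?thesis
    using right_chain_shift_le[OF d d', of r r s] right_chain_shift_le[OF d' d, of r r s]
      \<open>m \<le> P\<close> m by simp
qed

lemma right_chain_piece_beyond:
  assumes d: "right_chain P d" and y: "right_chain Q y"
    and le: "y m \<le> d t" and m: "m < Q" and t: "Suc (Suc t) \<le> P"
  shows "y (Suc m) < d (Suc (Suc t))"
proof (rule ccontr)
  assume "\<not> ?thesis"
  with le have "I (y m) (y (Suc m))"
    by (intro enlarge[OF _ _ right_chainD(3)[OF d t]]) auto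
  with right_chainD(2)[OF y m] show False by contradiction
qed

lemma nested_left_chain_iff:
  assumes c: "left_chain P c" "c P = 0"
    and x: "left_chain Q x" "x 0 = E" "x Q = k" "1 \<le> Q \<Longrightarrow> Suc (x 1) = E"
    and QP: "Q \<le> P"
  shows "even Q \<Longrightarrow> k = 0 \<longleftrightarrow> E \<le> c (P - Q)"
    and "odd Q \<Longrightarrow> k < c (P - 1) \<longleftrightarrow> E \<le> c (P - Q)"
proof -
  have below: "x (2 * s) \<le> c (P - Q + 2 * s)" if "E \<le> c (P - Q)" "2 * s \<le> Q" for s
    using left_chain_shift_le[OF c(1) x(1), of 0 "P - Q" s] that x(2) QP by simp
  have above: "c (P - Q + 2 * s) \<le> x (1 + 2 * s)" if "c (P - Q) < E" "1 + 2 * s \<le> Q" for s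
    using left_chain_shift_le[OF x(1) c(1), of "P - Q" 1 s] that x(4) QP by simp
  show "k = 0 \<longleftrightarrow> E \<le> c (P - Q)" if "even Q"
  proof
    from that obtain s where Q: "Q = 2 * s" by blast
    show "k = 0" if "E \<le> c (P - Q)"
      using below[OF that, of s] Q x(3) c(2) QP by simp
    show "E \<le> c (P - Q)" if "k = 0"
    proof (rule ccontr)
      assume "\<not> E \<le> c (P - Q)"
      then have "Q \<noteq> 0" using x(2,3) \<open>k = 0\<close> by (cases "Q = 0") auto
      then obtain s' where s': "Q = Suc (Suc (2 * s'))"
        using Q by (cases s) auto
      with above[of s'] \<open>\<not> E \<le> c (P - Q)\<close> QP have "c (P - 2) \<le> x (Q - 1)"
        by (simp add: numeral_2_eq_2)
      moreover have "Suc (Suc (P - 2)) = P" "Suc (Q - 1) = Q" using s' QP by auto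
      ultimately have "c P < x Q"
        using left_chain_piece_beyond[OF c(1) x(1), of "P - 2" "Q - 1"] s' QP by simp
      with \<open>k = 0\<close> x(3) show False by simp
    qed
  qed
  show "k < c (P - 1) \<longleftrightarrow> E \<le> c (P - Q)" if "odd Q"
  proof
    from that obtain s where Q: "Q = Suc (2 * s)" using oddE by fastforce
    show "k < c (P - 1)" if "E \<le> c (P - Q)"
      using below[OF that, of s] left_chainD(1)[OF x(1), of "2 * s"] Q x(3) QP
      by (simp add: Suc_diff_Suc)
    show "E \<le> c (P - Q)" if "k < c (P - 1)"
      using above[of s] Q x(3) QP that by (force simp: Suc_diff_Suc)
  qed
qed

lemma nested_right_chain_iff:
  assumes d: "right_chain P d" "d P = N"
    and y: "right_chain Q y" "y 0 = k" "y Q = E" "1 \<le> Q \<Longrightarrow> y 1 = Suc k"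
    and QP: "Q \<le> P" and EN: "E \<le> N"
  shows "even Q \<Longrightarrow> E = N \<longleftrightarrow> d (P - Q) \<le> k"
    and "odd Q \<Longrightarrow> d (P - 1) < E \<longleftrightarrow> d (P - Q) \<le> k"
proof -
  have above: "d (P - Q + 2 * s) \<le> y (2 * s)" if "d (P - Q) \<le> k" "2 * s \<le> Q" for s
    using right_chain_shift_le[OF d(1) y(1), of "P - Q" 0 s] that y(2) QP by simp
  have below: "y (1 + 2 * s) \<le> d (P - Q + 2 * s)" if "k < d (P - Q)" "1 + 2 * s \<le> Q" for s
    using right_chain_shift_le[OF y(1) d(1), of 1 "P - Q" s] that y(4) QP by simp
  show "E = N \<longleftrightarrow> d (P - Q) \<le> k" if "even Q"
  proof
    from that obtain s where Q: "Q = 2 * s" by blast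
    show "E = N" if "d (P - Q) \<le> k"
      using above[OF that, of s] Q y(3) d(2) QP EN by simp
    show "d (P - Q) \<le> k" if "E = N"
    proof (rule ccontr)
      assume "\<not> d (P - Q) \<le> k"
      then have "Q \<noteq> 0" using y(2,3) d(2) \<open>E = N\<close> by (cases "Q = 0") auto
      then obtain s' where s': "Q = Suc (Suc (2 * s'))"
        using Q by (cases s) auto
      with below[of s'] \<open>\<not> d (P - Q) \<le> k\<close> QP have "y (Q - 1) \<le> d (P - 2)"
        by (simp add: numeral_2_eq_2)
      moreover have "Suc (Suc (P - 2)) = P" "Suc (Q - 1) = Q" using s' QP by auto
      ultimately have "y Q < d P"
        using right_chain_piece_beyond[OF d(1) y(1), of "Q - 1" "P - 2"] s' QP by simp
      with \<open>E = N\<close> y(3) d(2) show False by simp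
    qed
  qed
  show "d (P - 1) < E \<longleftrightarrow> d (P - Q) \<le> k" if "odd Q"
  proof
    from that obtain s where Q: "Q = Suc (2 * s)" using oddE by fastforce
    show "d (P - 1) < E" if "d (P - Q) \<le> k"
      using above[OF that, of s] right_chainD(1)[OF y(1), of "2 * s"] Q y(3) QP
      by (simp add: Suc_diff_Suc)
    show "d (P - Q) \<le> k" if "d (P - 1) < E"
      using below[of s] Q y(3) QP that by (force simp: Suc_diff_Suc)
  qed
qed

fun greedy_right_chain :: "nat \<Rightarrow> nat \<Rightarrow> nat" where
  "greedy_right_chain s 0 = s"
| "greedy_right_chain s (Suc 0) = Suc s"
| "greedy_right_chain s (Suc (Suc m)) = (LEAST b. I (greedy_right_chain s m) b)"

lemma greedy_right_chain_overlap:
  "I (greedy_right_chain s m) b \<Longrightarrow> I (greedy_right_chain s m) (greedy_right_chain s (Suc (Suc m)))"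
  by (simp add: LeastI)

lemma left_chain_overlap_from:
  assumes c: "left_chain P c" and le: "a \<le> c (P - m)" and m: "Suc (Suc m) \<le> P"
  shows "I a (c (P - Suc (Suc m)))"
proof -
  have "I (c (P - m)) (c (P - Suc (Suc m)))"
    using left_chainD(3)[OF c, of "P - Suc (Suc m)"] m by (simp add: Suc_diff_Suc)
  from enlarge[OF le order_refl this] show ?thesis .
qed

lemma greedy_le_left_chain_step:
  assumes c: "left_chain P c" and le: "greedy_right_chain s m \<le> c (P - m)"
    and m: "Suc (Suc m) \<le> P"
  shows "greedy_right_chain s (Suc (Suc m)) \<le> c (P - Suc (Suc m))"
  using left_chain_overlap_from[OF c le m] by (simp add: Least_le)

lemma left_chain_less_greedy_step:
  assumes c: "left_chain P c"
    and lt: "c (P - m) < greedy_right_chain s (Suc m)"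
    and le: "greedy_right_chain s (Suc m) \<le> c (P - Suc m)"
    and m: "Suc (Suc (Suc m)) \<le> P"
  shows "c (P - Suc (Suc m)) < greedy_right_chain s (Suc (Suc (Suc m)))"
proof (rule ccontr)
  let ?g = "greedy_right_chain s"
  assume not_less: "\<not> ?thesis"
  have "I (?g (Suc m)) (?g (Suc (Suc (Suc m))))"
    using greedy_right_chain_overlap[OF left_chain_overlap_from[OF c le]] m by blast
  then have "I (Suc (c (P - m))) (c (P - Suc (Suc m)))"
    by (rule enlarge[rotated 2]) (use lt not_less in auto)
  moreover have "Suc (Suc (P - Suc (Suc m))) = P - m" using m by simp
  ultimately show False
    using left_chainD(4)[OF c, of "P - Suc (Suc m)"] m by simp
qed

lemma greedy_interleaves_left_chain:
  assumes c: "left_chain P c" "c P = s"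
  shows "m \<le> P \<Longrightarrow> greedy_right_chain s m \<le> c (P - m)"
    and "m < P \<Longrightarrow> c (P - m) < greedy_right_chain s (Suc m)"
proof -
  let ?g = "greedy_right_chain s"
  define A where "A m \<longleftrightarrow> (m \<le> P \<longrightarrow> ?g m \<le> c (P - m))" for m
  define B where "B m \<longleftrightarrow> (m < P \<longrightarrow> c (P - m) < ?g (Suc m))" for m
  have B1: "B 1"
    unfolding B_def
  proof
    assume "1 < P"
    have "I (?g 0) (c (P - 2))"
      using left_chain_overlap_from[OF c(1), of s 0] \<open>1 < P\<close> c(2) by (simp add: numeral_2_eq_2)
    then have overlap: "I s (?g (Suc (Suc 0)))"
      using greedy_right_chain_overlap[of s 0] by simp
    show "c (P - 1) < ?g (Suc 1)"
    proof (rule ccontr)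
      assume "\<not> ?thesis"
      with c(2) have "I (c P) (c (P - 1))"
        by (intro enlarge[OF _ _ overlap]) auto
      with left_chainD(2)[OF c(1), of "P - 1"] \<open>1 < P\<close> show False by simp
    qed
  qed
  have "A m \<and> B m \<and> A (Suc m) \<and> B (Suc m)" for m
  proof (induction m)
    case 0
    have "c P < c (P - 1)" if "1 \<le> P" using left_chainD(1)[OF c(1), of "P - 1"] that by simp
    then show ?case using B1 c(2) unfolding A_def B_def by auto
  next
    case (Suc m)
    then show ?case
      using greedy_le_left_chain_step[OF c(1), of s m]
        left_chain_less_greedy_step[OF c(1), of m s]
      unfolding A_def B_def by (simp add: Suc_diff_Suc)
  qed
  then show "m \<le> P \<Longrightarrow> ?g m \<le> c (P - m)" and "m < P \<Longrightarrow> c (P - m) < ?g (Suc m)"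
    unfolding A_def B_def by blast+
qed

lemma right_chain_greedy:
  assumes c: "left_chain P c" "c P = s"
  shows "right_chain P (greedy_right_chain s)"
proof -
  let ?g = "greedy_right_chain s"
  note below = greedy_interleaves_left_chain(1)[OF c]
    and above = greedy_interleaves_left_chain(2)[OF c]
  have increasing: "?g m < ?g (Suc m)" if "m < P" for m
    using below[of m] above[of m] that by simp
  have piece: "\<not> I (?g m) (?g (Suc m))" if m: "m < P" for m
  proof
    assume I: "I (?g m) (?g (Suc m))"
    show False
    proof (cases m)
      case 0
      have "Suc s \<le> c (P - 1)" using below[of 1] m 0 by simp
      then have "I (c P) (c (P - 1))" using enlarge[OF _ _ I, of "c P" "c (P - 1)"] 0 c(2) by simp
      with left_chainD(2)[OF c(1), of "P - 1"] m show False by simp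
    next
      case (Suc m')
      have "Suc (c (P - m')) \<le> ?g m" using above[of m'] Suc m by simp
      moreover have "?g (Suc m) \<le> c (P - Suc m)" using below[of "Suc m"] m by simp
      ultimately have "I (Suc (c (P - m'))) (c (P - Suc m))" by (rule enlarge[OF _ _ I])
      moreover have "Suc (Suc (P - Suc m)) = P - m'" using Suc m by simp
      ultimately show False using left_chainD(4)[OF c(1), of "P - Suc m"] Suc m by simp
    qed
  qed
  have overlap: "I (?g m) (?g (Suc (Suc m)))" and minimal: "\<not> I (?g m) (?g (Suc (Suc m)) - 1)"
    if m: "Suc (Suc m) \<le> P" for m
  proof -
    have "I (?g m) (c (P - Suc (Suc m)))"
      using left_chain_overlap_from[OF c(1) below[of m]] m by simp
    then show "I (?g m) (?g (Suc (Suc m)))" by (rule greedy_right_chain_overlap)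
    have "0 < ?g (Suc (Suc m))" using increasing[of "Suc m"] m by simp
    then have "?g (Suc (Suc m)) - 1 < (LEAST b. I (?g m) b)" by simp
    then show "\<not> I (?g m) (?g (Suc (Suc m)) - 1)" by (rule not_less_Least)
  qed
  show ?thesis unfolding right_chain_def using increasing piece overlap minimal by blast
qed

lemma greedy_right_chain_end:
  assumes c: "left_chain P c" "c P = s" and "1 \<le> P \<Longrightarrow> Suc (c 1) = c 0"
  shows "greedy_right_chain s P = c 0"
proof (cases P)
  case 0
  then show ?thesis using c(2) by simp
next
  case (Suc P')
  then show ?thesis
    using greedy_interleaves_left_chain(1)[OF c, of P] greedy_interleaves_left_chain(2)[OF c, of P']
      assms(3) by simp
qed

end

section \<open>Segments of a word and decompositions\<close>

definition seg :: "'a list \<Rightarrow> nat \<Rightarrow> nat \<Rightarrow> 'a list" where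
  "seg w s e = take (e - s) (drop s w)"

definition seg_in_I :: "'a list set \<Rightarrow> 'a list \<Rightarrow> nat \<Rightarrow> nat \<Rightarrow> bool" where
  "seg_in_I R w s e \<longleftrightarrow> in_I R (seg w s e)"

lemma seg_append: "a \<le> b \<Longrightarrow> b \<le> c \<Longrightarrow> seg w a c = seg w a b @ seg w b c"
proof -
  assume "a \<le> b" "b \<le> c"
  then have "c - a = (b - a) + (c - b)" by simp
  then have "take (c - a) (drop a w) = take (b - a) (drop a w) @ take (c - b) (drop (b - a) (drop a w))"
    by (simp only: take_add)
  with \<open>a \<le> b\<close> show ?thesis unfolding seg_def by simp
qed

lemma length_seg: "e \<le> length w \<Longrightarrow> length (seg w s e) = e - s"
  unfolding seg_def by simp

lemma seg_full: "seg w 0 (length w) = w"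
  unfolding seg_def by simp

lemma drop_one_seg: "drop 1 (seg w a b) = seg w (Suc a) b"
  unfolding seg_def by (simp add: drop_take drop_drop)

lemma take_seg: "k \<le> b - a \<Longrightarrow> take k (seg w a b) = seg w a (a + k)"
  unfolding seg_def by (simp add: min_def)

lemma seg_middle:
  assumes "E \<le> length w" "seg w k E = A @ X @ B"
  shows "X = seg w (k + length A) (k + length A + length X)"
proof -
  have "take (length X) (drop (length A) (seg w k E)) = X" using assms(2) by simp
  moreover have "length (seg w k E) = length A + length X + length B" using assms(2) by simp
  then have "length X \<le> E - (k + length A)" using assms(1) unfolding seg_def by simp
  ultimately show ?thesis
    unfolding seg_def by (simp add: drop_take drop_drop take_take min_def add.commute)
qed

lemma in_I_infix: "in_I R xs \<Longrightarrow> in_I R (u @ xs @ v)"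
  unfolding in_I_def by (metis append.assoc)

lemma in_I_Nil: "in_I R [] \<Longrightarrow> in_I R xs"
  unfolding in_I_def by (metis Nil_is_append_conv append_Nil2)

text \<open>No hypothesis on \<open>R\<close> is needed: if \<open>[] \<in> R\<close>, every word lies in the ideal.\<close>

interpretation seg_ideal: interval_ideal "seg_in_I R w" for R w
proof
  fix a b s e
  assume "a \<le> s" "e \<le> b" "seg_in_I R w s e"
  show "seg_in_I R w a b"
  proof (cases "s \<le> e")
    case True
    with \<open>a \<le> s\<close> \<open>e \<le> b\<close> have "seg w a b = seg w a s @ seg w s e @ seg w e b"
      by (metis seg_append le_trans)
    with \<open>seg_in_I R w s e\<close> show ?thesis unfolding seg_in_I_def by (metis in_I_infix)
  next
    case False
    with \<open>seg_in_I R w s e\<close> show ?thesis unfolding seg_in_I_def seg_def by (simp add: in_I_Nil)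
  qed
qed

lemma length_concat_take_le: "length (concat (take m xss)) \<le> length (concat xss)"
  by (metis append_take_drop_id concat_append le_add1 length_append)

lemma length_concat_take_Suc:
  "m < length xss \<Longrightarrow> length (concat (take (Suc m) xss)) = length (concat (take m xss)) + length (xss ! m)"
  by (simp add: take_Suc_conv_app_nth)

lemma left_dec_nonempty:
  assumes "left_dec Q R p us" "m < length us"
  shows "us ! m \<noteq> []"
proof (cases m)
  case 0
  then show ?thesis using assms unfolding left_dec_def by auto
next
  case (Suc m')
  have "in_I R (us ! m @ us ! m')" "\<not> in_I R (us ! m')" using assms Suc unfolding left_dec_def by auto
  then show ?thesis by auto
qed

lemma right_dec_nonempty:
  assumes "right_dec Q R p vs" "m < length vs"
  shows "vs ! m \<noteq> []"
proof (cases m)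
  case 0
  then show ?thesis using assms unfolding right_dec_def by auto
next
  case (Suc m')
  have "in_I R (vs ! m' @ vs ! m)" "\<not> in_I R (vs ! m')" using assms Suc unfolding right_dec_def by auto
  then show ?thesis by auto
qed

definition left_cuts :: "nat \<Rightarrow> 'a list list \<Rightarrow> nat \<Rightarrow> nat" where
  "left_cuts E us m = E - length (concat (take m us))"

definition right_cuts :: "nat \<Rightarrow> 'a list list \<Rightarrow> nat \<Rightarrow> nat" where
  "right_cuts k vs m = k + length (concat (take m vs))"

lemma left_cuts_0 [simp]: "left_cuts E us 0 = E"
  unfolding left_cuts_def by simp

lemma right_cuts_0 [simp]: "right_cuts k vs 0 = k"
  unfolding right_cuts_def by simp

lemma nth_eq_seg_left_cuts:
  assumes cat: "concat (rev us) = seg w k E" and kE: "k \<le> E" and Ew: "E \<le> length w"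
    and m: "m < length us"
  shows "us ! m = seg w (left_cuts E us (Suc m)) (left_cuts E us m)"
proof -
  define A where "A = concat (rev (drop (Suc m) us))"
  define B where "B = concat (rev (take m us))"
  have "us = take m us @ us ! m # drop (Suc m) us" using m by (simp add: id_take_nth_drop)
  then have "rev us = rev (drop (Suc m) us) @ [us ! m] @ rev (take m us)"
    by (metis rev.simps(2) rev_append append.assoc append_Cons append_Nil)
  then have split: "seg w k E = A @ us ! m @ B" using cat unfolding A_def B_def by simp
  have "length A + length (us ! m) + length B = E - k"
    using arg_cong[OF split, of length] length_seg[OF Ew] by simp
  moreover have "length B = length (concat (take m us))" unfolding B_def by simp
  ultimately have "k + length A = left_cuts E us (Suc m)"
    and "k + length A + length (us ! m) = left_cuts E us m"
    unfolding left_cuts_def using length_concat_take_Suc[OF m] kE by simp_all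
  with seg_middle[OF Ew split] show ?thesis by simp
qed

lemma nth_eq_seg_right_cuts:
  assumes cat: "concat vs = seg w k E" and Ew: "E \<le> length w" and m: "m < length vs"
  shows "vs ! m = seg w (right_cuts k vs m) (right_cuts k vs (Suc m))"
proof -
  have "vs = take m vs @ vs ! m # drop (Suc m) vs" using m by (simp add: id_take_nth_drop)
  then have "seg w k E = concat (take m vs) @ vs ! m @ concat (drop (Suc m) vs)"
    using cat by (metis concat.simps(2) concat_append)
  from seg_middle[OF Ew this] show ?thesis
    unfolding right_cuts_def using length_concat_take_Suc[OF m] by (simp add: add.assoc)
qed

lemma left_dec_chain:
  assumes dec: "left_dec Q R q us" and q: "snd q = seg w k E" and kE: "k \<le> E" and Ew: "E \<le> length w"
  shows "interval_ideal.left_chain (seg_in_I R w) (length us) (left_cuts E us)"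
    and "left_cuts E us (length us) = k"
    and "1 \<le> length us \<Longrightarrow> Suc (left_cuts E us 1) = E"
proof -
  let ?L = "\<lambda>m. length (concat (take m us))" and ?c = "left_cuts E us"
  have cat: "concat (rev us) = seg w k E" using dec q unfolding left_dec_def by simp
  then have total: "length (concat us) = E - k"
    using length_seg[OF Ew] length_concat_rev by metis
  then have L_le: "?L m \<le> E - k" for m using length_concat_take_le by metis
  have piece: "us ! m = seg w (?c (Suc m)) (?c m)" if "m < length us" for m
    by (rule nth_eq_seg_left_cuts[OF cat kE Ew that])
  have cut_Suc: "?c (Suc m) \<le> ?c m" for m
    unfolding left_cuts_def by (cases "m < length us") (simp_all add: length_concat_take_Suc)
  show "interval_ideal.left_chain (seg_in_I R w) (length us) ?c"
    unfolding seg_ideal.left_chain_def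
  proof (intro conjI allI impI)
    fix m assume m: "m < length us"
    have "0 < length (us ! m)" using left_dec_nonempty[OF dec m] by simp
    then show "?c (Suc m) < ?c m"
      unfolding left_cuts_def using length_concat_take_Suc[OF m] L_le[of "Suc m"] kE by linarith
    show "\<not> seg_in_I R w (?c (Suc m)) (?c m)"
      using piece[OF m] dec m unfolding seg_in_I_def left_dec_def by metis
  next
    fix m assume m: "Suc (Suc m) \<le> length us"
    have overlap: "seg w (?c (Suc (Suc m))) (?c m) = us ! Suc m @ us ! m"
      using piece[of m] piece[of "Suc m"] m seg_append[OF cut_Suc cut_Suc] by simp
    moreover have "in_I R (us ! Suc m @ us ! m)"
      and minimal: "\<forall>j. 0 < j \<and> j \<le> length (us ! Suc m @ us ! m) \<longrightarrow> \<not> in_I R (drop j (us ! Suc m @ us ! m))"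
      using dec Suc_le_lessD[OF m] unfolding left_dec_def by blast+
    moreover have "\<not> in_I R (drop 1 (us ! Suc m @ us ! m))"
      using minimal[rule_format, of 1] left_dec_nonempty[OF dec, of m] m
      by (simp add: Suc_leI)
    ultimately show "seg_in_I R w (?c (Suc (Suc m))) (?c m)"
      and "\<not> seg_in_I R w (Suc (?c (Suc (Suc m)))) (?c m)"
      unfolding seg_in_I_def drop_one_seg[symmetric] by simp_all
  qed
  show "?c (length us) = k" unfolding left_cuts_def using total kE by simp
  show "Suc (?c 1) = E" if "1 \<le> length us"
  proof -
    have "length (us ! 0) = 1" using dec that unfolding left_dec_def by fastforce
    then have "?L 1 = 1" using that by (cases us) auto
    with L_le[of 1] show ?thesis unfolding left_cuts_def by simp
  qed
qed

lemma right_dec_chain: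
  assumes dec: "right_dec Q R q vs" and q: "snd q = seg w k E" and kE: "k \<le> E" and Ew: "E \<le> length w"
  shows "interval_ideal.right_chain (seg_in_I R w) (length vs) (right_cuts k vs)"
    and "right_cuts k vs (length vs) = E"
    and "1 \<le> length vs \<Longrightarrow> right_cuts k vs 1 = Suc k"
proof -
  let ?d = "right_cuts k vs"
  have cat: "concat vs = seg w k E" using dec q unfolding right_dec_def by simp
  have d_Suc: "?d (Suc m) = ?d m + length (vs ! m)" if "m < length vs" for m
    unfolding right_cuts_def using length_concat_take_Suc[OF that] by simp
  have piece: "vs ! m = seg w (?d m) (?d (Suc m))" if "m < length vs" for m
    by (rule nth_eq_seg_right_cuts[OF cat Ew that])
  have d_mono: "?d m \<le> ?d (Suc m)" for m
    unfolding right_cuts_def by (cases "m < length vs") (simp_all add: length_concat_take_Suc)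
  show "interval_ideal.right_chain (seg_in_I R w) (length vs) ?d"
    unfolding seg_ideal.right_chain_def
  proof (intro conjI allI impI)
    fix m assume m: "m < length vs"
    show "?d m < ?d (Suc m)" using d_Suc[OF m] right_dec_nonempty[OF dec m] by simp
    show "\<not> seg_in_I R w (?d m) (?d (Suc m))"
      using piece[OF m] dec m unfolding seg_in_I_def right_dec_def by metis
  next
    fix m assume m: "Suc (Suc m) \<le> length vs"
    let ?uv = "vs ! m @ vs ! Suc m"
    have overlap: "seg w (?d m) (?d (Suc (Suc m))) = ?uv"
      using piece[of m] piece[of "Suc m"] m seg_append[OF d_mono d_mono] by simp
    have "in_I R ?uv" and minimal: "\<forall>j. j < length ?uv \<longrightarrow> \<not> in_I R (take j ?uv)"
      using dec Suc_le_lessD[OF m] unfolding right_dec_def by blast+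
    have len: "length ?uv = ?d (Suc (Suc m)) - ?d m" and "0 < length ?uv"
      using d_Suc[of m] d_Suc[of "Suc m"] right_dec_nonempty[OF dec, of m] m by auto
    then have "take (length ?uv - 1) ?uv = seg w (?d m) (?d (Suc (Suc m)) - 1)"
      using take_seg[of "length ?uv - 1" "?d (Suc (Suc m))" "?d m" w] overlap by simp
    moreover have "\<not> in_I R (take (length ?uv - 1) ?uv)"
      using minimal[rule_format, of "length ?uv - 1"] \<open>0 < length ?uv\<close> by (simp del: take_append)
    ultimately show "seg_in_I R w (?d m) (?d (Suc (Suc m)))"
      and "\<not> seg_in_I R w (?d m) (?d (Suc (Suc m)) - 1)"
      using \<open>in_I R ?uv\<close> overlap unfolding seg_in_I_def by simp_all
  qed
  show "?d (length vs) = E" unfolding right_cuts_def using cat length_seg[OF Ew] kE by simp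
  show "?d 1 = Suc k" if "1 \<le> length vs"
    using dec that unfolding right_dec_def right_cuts_def by (cases vs) auto
qed

lemma take_seg_not_in_I:
  assumes "\<not> seg_in_I R w s (e - 1)" and j: "j < e - s"
  shows "\<not> in_I R (take j (seg w s e))"
proof
  assume "in_I R (take j (seg w s e))"
  then have "seg_in_I R w s (s + j)" using take_seg[of j e s w] j unfolding seg_in_I_def by simp
  then have "seg_in_I R w s (e - 1)" by (rule seg_ideal.enlarge[rotated 2]) (use j in auto)
  with assms(1) show False by contradiction
qed

lemma concat_segs:
  assumes "\<forall>m<P. d m \<le> d (Suc m)"
  shows "concat (map (\<lambda>m. seg w (d m) (d (Suc m))) [0..<P]) = seg w (d 0) (d P)"
  using assms
proof (induction P)
  case 0
  then show ?case unfolding seg_def by simp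
next
  case (Suc P)
  have "d 0 \<le> d P" using lift_Suc_mono_le_ivl[of "{..<P}" d 0 P] Suc.prems by (auto simp: subset_eq)
  with Suc show ?case using seg_append[of "d 0" "d P" "d (Suc P)" w] by simp
qed

lemma right_dec_of_right_chain:
  assumes chain: "interval_ideal.right_chain (seg_in_I R (snd p)) P d"
    and ends: "d 0 = 0" "d P = length (snd p)" "1 \<le> P \<Longrightarrow> d 1 = 1" and path: "is_path Q p"
  shows "right_dec Q R p (map (\<lambda>m. seg (snd p) (d m) (d (Suc m))) [0..<P])"
proof -
  let ?w = "snd p"
  define vs where "vs = map (\<lambda>m. seg ?w (d m) (d (Suc m))) [0..<P]"
  have inc: "\<forall>m<P. d m \<le> d (Suc m)"
    using seg_ideal.right_chainD(1)[OF chain] by (simp add: less_imp_le)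
  have bounded: "d m \<le> length ?w" if "m \<le> P" for m
    using lift_Suc_mono_le_ivl[of "{..<P}" d m P] that inc ends(2) by (auto simp: subset_eq)
  have vs_nth: "vs ! m = seg ?w (d m) (d (Suc m))" if "m < P" for m
    using that unfolding vs_def by simp
  have "concat vs = ?w" unfolding vs_def using concat_segs[OF inc] ends seg_full by metis
  moreover have "length (vs ! 0) = 1" if "vs \<noteq> []"
  proof -
    from that have "1 \<le> P" unfolding vs_def by simp
    then show ?thesis using vs_nth[of 0] ends length_seg[OF bounded[of 1]] by simp
  qed
  moreover have "\<not> in_I R (vs ! m)" if "m < length vs" for m
    using seg_ideal.right_chainD(2)[OF chain] vs_nth that unfolding vs_def seg_in_I_def by simp
  moreover have "in_I R (vs ! m @ vs ! Suc m)
      \<and> (\<forall>j. j < length (vs ! m @ vs ! Suc m) \<longrightarrow> \<not> in_I R (take j (vs ! m @ vs ! Suc m)))"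
    if "Suc m < length vs" for m
  proof (intro conjI allI impI)
    from that have m: "Suc (Suc m) \<le> P" unfolding vs_def by simp
    have "seg ?w (d m) (d (Suc (Suc m))) = seg ?w (d m) (d (Suc m)) @ seg ?w (d (Suc m)) (d (Suc (Suc m)))"
      using inc m by (intro seg_append) auto
    then have split: "vs ! m @ vs ! Suc m = seg ?w (d m) (d (Suc (Suc m)))"
      using vs_nth[of m] vs_nth[of "Suc m"] m by simp
    then show "in_I R (vs ! m @ vs ! Suc m)"
      using seg_ideal.right_chainD(3)[OF chain m] unfolding seg_in_I_def by simp
    fix j assume "j < length (vs ! m @ vs ! Suc m)"
    then have "j < d (Suc (Suc m)) - d m" using split length_seg[OF bounded[OF m]] by simp
    then show "\<not> in_I R (take j (vs ! m @ vs ! Suc m))"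
      unfolding split by (rule take_seg_not_in_I[OF seg_ideal.right_chainD(4)[OF chain m]])
  qed
  ultimately show ?thesis using path unfolding right_dec_def vs_def by simp
qed

lemma left_dec_unique:
  assumes dec: "left_dec Q R p us" and dec': "left_dec Q R p us'" and len: "length us' = length us"
  shows "us' = us"
proof -
  let ?N = "length (snd p)"
  have p: "snd p = seg (snd p) 0 ?N" by (simp add: seg_full)
  with dec dec' have cat: "concat (rev us) = seg (snd p) 0 ?N" and cat': "concat (rev us') = seg (snd p) 0 ?N"
    unfolding left_dec_def by simp_all
  note c = left_dec_chain[OF dec p le0 order_refl] and c' = left_dec_chain[OF dec' p le0 order_refl]
  have cuts: "left_cuts ?N us' m = left_cuts ?N us m" if "m \<le> length us" for m
    using seg_ideal.left_chain_unique[OF c'(1)[unfolded len] c(1)] c(3) c'(3) len that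
    by (force simp: left_cuts_def)
  show ?thesis
  proof (rule nth_equalityI)
    fix m assume "m < length us'"
    then show "us' ! m = us ! m"
      using nth_eq_seg_left_cuts[OF cat' le0 order_refl, of m] nth_eq_seg_left_cuts[OF cat le0 order_refl, of m]
        cuts[of m] cuts[of "Suc m"] len by simp
  qed (rule len)
qed

lemma right_dec_unique:
  assumes dec: "right_dec Q R p vs" and dec': "right_dec Q R p vs'" and len: "length vs' = length vs"
  shows "vs' = vs"
proof -
  let ?N = "length (snd p)"
  have p: "snd p = seg (snd p) 0 ?N" by (simp add: seg_full)
  with dec dec' have cat: "concat vs = seg (snd p) 0 ?N" and cat': "concat vs' = seg (snd p) 0 ?N"
    unfolding right_dec_def by simp_all
  note d = right_dec_chain[OF dec p le0 order_refl] and d' = right_dec_chain[OF dec' p le0 order_refl]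
  have cuts: "right_cuts 0 vs' m = right_cuts 0 vs m" if "m \<le> length vs" for m
    using seg_ideal.right_chain_unique[OF d'(1)[unfolded len] d(1)] d(3) d'(3) len that
    by (force simp: right_cuts_def)
  show ?thesis
  proof (rule nth_equalityI)
    fix m assume "m < length vs'"
    then show "vs' ! m = vs ! m"
      using nth_eq_seg_right_cuts[OF cat' order_refl, of m] nth_eq_seg_right_cuts[OF cat order_refl, of m]
        cuts[of m] cuts[of "Suc m"] len by simp
  qed (rule len)
qed

lemma right_dec_exists:
  assumes dec: "left_dec Q R p us"
  obtains vs where "length vs = length us" "right_dec Q R p vs"
proof -
  let ?w = "snd p"
  let ?g = "interval_ideal.greedy_right_chain (seg_in_I R ?w) 0"
  have p: "snd p = seg ?w 0 (length ?w)" by (simp add: seg_full)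
  note c = left_dec_chain[OF dec p le0 order_refl]
  have "interval_ideal.right_chain (seg_in_I R ?w) (length us) ?g"
    using seg_ideal.right_chain_greedy[OF c(1) c(2)] .
  moreover have "?g (length us) = length ?w"
    using seg_ideal.greedy_right_chain_end[OF c(1) c(2)] c(3) by simp
  moreover have "is_path Q p" using dec unfolding left_dec_def by blast
  ultimately have "right_dec Q R p (map (\<lambda>m. seg ?w (?g m) (?g (Suc m))) [0..<length us])"
    by (intro right_dec_of_right_chain) simp_all
  then show thesis by (intro that) simp_all
qed

lemma plen_sigma:
  assumes dec: "left_dec Q R p us" and len: "length us = nat (n + 1)"
  shows "plen (sigma Q R n m p) = length (concat (take (nat (m + 1)) us))"
proof -
  have "(THE us'. length us' = nat (n + 1) \<and> left_dec Q R p us') = us"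
  proof (rule the_equality)
    show "length us = nat (n + 1) \<and> left_dec Q R p us" using dec len by blast
    fix us' assume "length us' = nat (n + 1) \<and> left_dec Q R p us'"
    then show "us' = us" using left_dec_unique[OF dec, of us'] len by argo
  qed
  then show ?thesis unfolding sigma_def plen_def Let_def by simp
qed

lemma plen_pi:
  assumes dec: "right_dec Q R p vs" and len: "length vs = nat (n + 1)"
  shows "plen (pi Q R n m p) = length (concat (take (nat (m + 1)) vs))"
proof -
  have "(THE vs'. length vs' = nat (n + 1) \<and> right_dec Q R p vs') = vs"
  proof (rule the_equality)
    show "length vs = nat (n + 1) \<and> right_dec Q R p vs" using dec len by blast
    fix vs' assume "length vs' = nat (n + 1) \<and> right_dec Q R p vs'"
    then show "vs' = vs" using right_dec_unique[OF dec, of vs'] len by argo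
  qed
  then show ?thesis unfolding pi_def plen_def Let_def by simp
qed

section \<open>Ambiguities and their occurrences\<close>

lemma occurs_at_seg:
  assumes "occurs_at Q p q k"
  shows "snd q = seg (snd p) k (k + plen q)" and "k + plen q \<le> plen p"
  using assms unfolding occurs_at_def seg_def plen_def by auto

lemma left_dec_length: "left_dec Q R p us \<Longrightarrow> length (concat us) = plen p"
  unfolding left_dec_def plen_def by simp

lemma right_dec_length: "right_dec Q R p vs \<Longrightarrow> length (concat vs) = plen p"
  unfolding right_dec_def plen_def by simp

lemma plen_sigma_le:
  assumes "p \<in> Gamma Q R n"
  shows "plen (sigma Q R n m p) \<le> plen p"
proof -
  obtain us where "length us = nat (n + 1)" "left_dec Q R p us" using assms unfolding Gamma_def by blast
  then show ?thesis using plen_sigma left_dec_length length_concat_take_le by metis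
qed

lemma plen_pi_le:
  assumes "p \<in> Gamma Q R n"
  shows "plen (pi Q R n m p) \<le> plen p"
proof -
  obtain us where "length us = nat (n + 1)" "left_dec Q R p us" using assms unfolding Gamma_def by blast
  then obtain vs where "length vs = nat (n + 1)" "right_dec Q R p vs" by (metis right_dec_exists)
  then show ?thesis using plen_pi right_dec_length length_concat_take_le by metis
qed

lemma ambiguity_indices:
  assumes "i \<ge> -1" "j \<ge> -1" "i + j = n - 1"
  shows "nat (j + 1) = nat (n + 1) - nat (i + 1)" and "nat n = nat (n + 1) - 1"
    and "nat (i + 1) \<le> nat (n + 1)" and "even i \<longleftrightarrow> odd (nat (i + 1))"
proof -
  have "int (nat (i + 1)) = i + 1" using assms(1) by simp
  then show "even i \<longleftrightarrow> odd (nat (i + 1))" by (metis even_add odd_one even_of_nat)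
qed (use assms in auto)

lemma sigma_occurrence_criterion:
  assumes p: "p \<in> Gamma Q R n" and q: "q \<in> Gamma Q R i" and occ: "occurs_at Q p q k"
    and ij: "i \<ge> -1" "j \<ge> -1" "i + j = n - 1"
  shows "odd i \<Longrightarrow> k = 0 \<longleftrightarrow> k + plen q \<le> plen p - plen (sigma Q R n j p)"
    and "even i \<Longrightarrow> k < plen p - plen (sigma Q R n (n - 1) p)
                       \<longleftrightarrow> k + plen q \<le> plen p - plen (sigma Q R n j p)"
proof -
  obtain us where us: "length us = nat (n + 1)" "left_dec Q R p us"
    using p unfolding Gamma_def by blast
  obtain uq where uq: "length uq = nat (i + 1)" "left_dec Q R q uq"
    using q unfolding Gamma_def by blast
  have p_seg: "snd p = seg (snd p) 0 (plen p)" and p_len: "plen p \<le> length (snd p)"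
    by (simp_all add: seg_full plen_def)
  note c = left_dec_chain[OF us(2) p_seg le0 p_len]
  note x = left_dec_chain[OF uq(2) occurs_at_seg(1)[OF occ] le_add1 order_trans[OF occurs_at_seg(2)[OF occ] p_len]]
  have sigma: "plen p - plen (sigma Q R n m p) = left_cuts (plen p) us (nat (m + 1))" for m
    using plen_sigma[OF us(2,1)] length_concat_take_le[of "nat (m + 1)" us] left_dec_length[OF us(2)]
    unfolding left_cuts_def by simp
  note nested = seg_ideal.nested_left_chain_iff[OF c(1,2)[unfolded us(1)] x(1)[unfolded uq(1)]
      left_cuts_0 x(2,3)[unfolded uq(1)] ambiguity_indices(3)[OF ij]]
  show "odd i \<Longrightarrow> k = 0 \<longleftrightarrow> k + plen q \<le> plen p - plen (sigma Q R n j p)"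
    and "even i \<Longrightarrow> k < plen p - plen (sigma Q R n (n - 1) p)
                       \<longleftrightarrow> k + plen q \<le> plen p - plen (sigma Q R n j p)"
    using nested by (simp_all add: sigma ambiguity_indices[OF ij] us(1))
qed

lemma pi_occurrence_criterion:
  assumes p: "p \<in> Gamma Q R n" and q: "q \<in> Gamma Q R i" and occ: "occurs_at Q p q k"
    and ij: "i \<ge> -1" "j \<ge> -1" "i + j = n - 1"
  shows "odd i \<Longrightarrow> k + plen q = plen p \<longleftrightarrow> plen (pi Q R n j p) \<le> k"
    and "even i \<Longrightarrow> plen (pi Q R n (n - 1) p) < k + plen q \<longleftrightarrow> plen (pi Q R n j p) \<le> k"
proof -
  obtain us where "length us = nat (n + 1)" "left_dec Q R p us"
    using p unfolding Gamma_def by blast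
  then obtain vs where vs: "length vs = nat (n + 1)" "right_dec Q R p vs"
    by (metis right_dec_exists)
  obtain uq where "length uq = nat (i + 1)" "left_dec Q R q uq"
    using q unfolding Gamma_def by blast
  then obtain vq where vq: "length vq = nat (i + 1)" "right_dec Q R q vq"
    by (metis right_dec_exists)
  have p_seg: "snd p = seg (snd p) 0 (plen p)" and p_len: "plen p \<le> length (snd p)"
    by (simp_all add: seg_full plen_def)
  note d = right_dec_chain[OF vs(2) p_seg le0 p_len]
  note y = right_dec_chain[OF vq(2) occurs_at_seg(1)[OF occ] le_add1 order_trans[OF occurs_at_seg(2)[OF occ] p_len]]
  have pi: "plen (pi Q R n m p) = right_cuts 0 vs (nat (m + 1))" for m
    using plen_pi[OF vs(2,1)] unfolding right_cuts_def by simp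
  note nested = seg_ideal.nested_right_chain_iff[OF d(1,2)[unfolded vs(1)] y(1)[unfolded vq(1)]
      right_cuts_0 y(2,3)[unfolded vq(1)] ambiguity_indices(3)[OF ij] occurs_at_seg(2)[OF occ]]
  show "odd i \<Longrightarrow> k + plen q = plen p \<longleftrightarrow> plen (pi Q R n j p) \<le> k"
    and "even i \<Longrightarrow> plen (pi Q R n (n - 1) p) < k + plen q \<longleftrightarrow> plen (pi Q R n j p) \<le> k"
    using nested by (simp_all add: pi ambiguity_indices[OF ij] vs(1))
qed

lemma plen_pre_at: "k \<le> plen p \<Longrightarrow> plen (pre_at p k) = k"
  unfolding pre_at_def plen_def by simp

lemma plen_suf_at: "plen (suf_at Q p q k) = plen p - (k + plen q)"
  unfolding suf_at_def plen_def by simp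

lemma occ_le_pre_at_iff: "k \<le> plen p \<Longrightarrow> occ_le x 0 (pre_at p k) 0 \<longleftrightarrow> plen x \<le> k"
  unfolding occ_le_def by (simp add: plen_pre_at)

lemma occ_le_suf_at_iff:
  assumes "plen x \<le> plen p" "k + plen q \<le> plen p"
  shows "occ_le x (plen p - plen x) (suf_at Q p q k) (k + plen q) \<longleftrightarrow> k + plen q \<le> plen p - plen x"
  using assms unfolding occ_le_def plen_suf_at by auto

lemma proper_prefix_pre_at_iff:
  assumes "k \<le> plen p" "l \<le> plen p"
  shows "proper_prefix (pre_at p k) (pre_at p l) \<longleftrightarrow> k < l"
proof
  assume "proper_prefix (pre_at p k) (pre_at p l)"
  then obtain u where "u \<noteq> []" and split: "take l (snd p) = take k (snd p) @ u"
    unfolding proper_prefix_def pre_at_def by auto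
  have "length (take l (snd p)) = length (take k (snd p)) + length u"
    unfolding split by simp
  moreover have "0 < length u" using \<open>u \<noteq> []\<close> by simp
  ultimately show "k < l" using assms unfolding plen_def by simp
next
  assume "k < l"
  then have "take l (snd p) = take k (snd p) @ drop k (take l (snd p))"
    by (metis append_take_drop_id less_imp_le_nat min.absorb1 take_take)
  moreover have "drop k (take l (snd p)) \<noteq> []" using \<open>k < l\<close> assms unfolding plen_def by simp
  ultimately show "proper_prefix (pre_at p k) (pre_at p l)"
    unfolding proper_prefix_def pre_at_def fst_conv snd_conv by blast
qed

lemma vertex_at_end_suf_at:
  assumes "k + plen q \<le> plen p"
  shows "vertex_at Q (suf_at Q p q k) (plen (suf_at Q p q k)) = vertex_at Q p (plen p)"
  using assms unfolding suf_at_def vertex_at_def plen_def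
  by (cases "k + length (snd q) = length (snd p)") (auto simp: nth_drop)

lemma proper_suffix_suf_at_iff:
  assumes "k + plen q \<le> plen p" "plen r \<le> plen p"
  shows "proper_suffix Q (suf_at Q p q k) (suf_at Q p r 0) \<longleftrightarrow> plen r < k + plen q"
proof -
  let ?e = "k + plen q" and ?d = "plen r" and ?w = "snd p"
  have "(\<exists>u. u \<noteq> [] \<and> drop ?d ?w = u @ drop ?e ?w) \<longleftrightarrow> ?d < ?e"
  proof
    assume "\<exists>u. u \<noteq> [] \<and> drop ?d ?w = u @ drop ?e ?w"
    then obtain u where "u \<noteq> []" and split: "drop ?d ?w = u @ drop ?e ?w" by blast
    have "length (drop ?d ?w) = length u + length (drop ?e ?w)"
      unfolding split by simp
    moreover have "0 < length u" using \<open>u \<noteq> []\<close> by simp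
    ultimately show "?d < ?e" using assms unfolding plen_def length_drop by linarith
  next
    assume "?d < ?e"
    then have "drop ?d ?w = take (?e - ?d) (drop ?d ?w) @ drop ?e ?w"
      using append_take_drop_id[of "?e - ?d" "drop ?d ?w"] by simp
    moreover have "take (?e - ?d) (drop ?d ?w) \<noteq> []"
      using \<open>?d < ?e\<close> assms unfolding plen_def by simp
    ultimately show "\<exists>u. u \<noteq> [] \<and> drop ?d ?w = u @ drop ?e ?w" by blast
  qed
  then show ?thesis
    using vertex_at_end_suf_at[of k q p Q] vertex_at_end_suf_at[of 0 r p Q] assms
    unfolding proper_suffix_def by (simp add: suf_at_def)
qed

theorem mainTheorem7:
  fixes Q :: "('v, 'a) quiver" and R :: "'a list set"
    and n i j :: int and p q :: "('v, 'a) path" and k :: nat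
  assumes "fd_monomial Q R"
    and "n \<ge> 0" and "i \<ge> -1" and "j \<ge> -1" and "i + j = n - 1"
    and "p \<in> Gamma Q R n" and "q \<in> Gamma Q R i"
    and "occurs_at Q p q k"
  shows
   "(odd i \<longrightarrow>
       (plen (pre_at p k) = 0 \<longleftrightarrow>
        occ_le (sigma Q R n j p) (plen p - plen (sigma Q R n j p))
               (suf_at Q p q k) (k + plen q)))
  \<and> (even i \<longrightarrow>
       (proper_prefix (pre_at p k) (pre_at p (plen p - plen (sigma Q R n (n - 1) p))) \<longleftrightarrow>
        occ_le (sigma Q R n j p) (plen p - plen (sigma Q R n j p))
               (suf_at Q p q k) (k + plen q)))
  \<and> (odd i \<longrightarrow>
       (plen (suf_at Q p q k) = 0 \<longleftrightarrow>
        occ_le (pi Q R n j p) 0 (pre_at p k) 0))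
  \<and> (even i \<longrightarrow>
       (proper_suffix Q (suf_at Q p q k) (suf_at Q p (pi Q R n (n - 1) p) 0) \<longleftrightarrow>
        occ_le (pi Q R n j p) 0 (pre_at p k) 0))"
proof -
  have occ: "k + plen q \<le> plen p" by (rule occurs_at_seg(2)[OF assms(8)])
  note sigma = sigma_occurrence_criterion[OF assms(6-8,3-5)]
    and pi = pi_occurrence_criterion[OF assms(6-8,3-5)]
  show ?thesis
    using sigma pi occ plen_sigma_le[OF assms(6)] plen_pi_le[OF assms(6)]
    by (auto simp: plen_pre_at plen_suf_at occ_le_pre_at_iff occ_le_suf_at_iff
        proper_prefix_pre_at_iff proper_suffix_suf_at_iff)
qed

end
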